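(* Let $\eta>0$ and $L>0$ be the strong monotonicity and Lipschitz constants of a mapping $F$ as in the context, let $\nu>0$, let $e_0>0$ with $\nu\ge L\sqrt{e_0/2}$, and let $\beta$ be a scalar with $0\le\beta<\frac{\eta}{L}$. Define error functions by $e_{k+1}(\delta_0,\dots,\delta_k)=(1-(\eta-\beta L)\delta_k)e_k(\delta_0,\dots,\delta_{k-1})+(1+\beta)^2\nu^2\delta_k^2$ for $k\ge0$, and let $\delta_0^*=\frac{\eta-\beta L}{2(1+\beta)^2\nu^2}e_0$, $\delta_k^*=\delta_{k-1}^*\big(1-\frac{\eta-\beta L}{2}\delta_{k-1}^*\big)$ for $k\ge1$. Then: (a) for all $k\ge0$, $e_k(\delta_0^*,\dots,\delta_{k-1}^* )=\frac{2(1+\beta)^2\nu^2}{\eta-\beta L}\delta_k^*$; (b) for any $k\ge1$, $(\delta_0^*,\dots,\delta_{k-1}^* )$ is the minimizer of $e_k$ over $\mathbb G_k\triangleq\{\alpha\in\mathbb R^k:0<\alpha_j\le\frac{\eta-\beta L}{(1+\beta)^2L^2},\ j=1,\dots,k\}$; more precisely, for any $(\delta_0,\dots,\delta_{k-1})\in\mathbb G_k$, $e_k(\delta_0,\dots,\delta_{k-1})-e_k(\delta_0^*,\dots,\delta_{k-1}^* )\ge(1+\beta)^2\nu^2(\delta_{k-1}-\delta_{k-1}^* )^2$.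
   Context: $F:X\to\mathbb R^n$ is a single-valued mapping on a nonempty closed convex set $X\subseteq\mathbb R^n$ which is Lipschitz continuous with constant $L$ ($\|F(x)-F(y)\|\le L\|x-y\|$) and strongly monotone with constant $\eta$ ($(F(x)-F(y))^T(x-y)\ge\eta\|x-y\|^2$) on $X$. *)

theory Defs
  imports "HOL-Analysis.Analysis"
begin

text \<open>Error functions e_k: the sequence delta :: nat => real gives the step sizes
  delta_0, delta_1, ...; err ... delta k = e_k(delta_0,...,delta_{k-1}) depends only on
  the first k entries.\<close>
fun err :: "real \<Rightarrow> real \<Rightarrow> real \<Rightarrow> real \<Rightarrow> real \<Rightarrow> (nat \<Rightarrow> real) \<Rightarrow> nat \<Rightarrow> real" where
  "err \<eta> L \<beta> \<nu> e0 \<delta> 0 = e0"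
| "err \<eta> L \<beta> \<nu> e0 \<delta> (Suc k) =
     (1 - (\<eta> - \<beta> * L) * \<delta> k) * err \<eta> L \<beta> \<nu> e0 \<delta> k + (1 + \<beta>)^2 * \<nu>^2 * (\<delta> k)^2"

fun delta_star :: "real \<Rightarrow> real \<Rightarrow> real \<Rightarrow> real \<Rightarrow> real \<Rightarrow> nat \<Rightarrow> real" where
  "delta_star \<eta> L \<beta> \<nu> e0 0 = (\<eta> - \<beta> * L) / (2 * (1 + \<beta>)^2 * \<nu>^2) * e0"
| "delta_star \<eta> L \<beta> \<nu> e0 (Suc k) =
     delta_star \<eta> L \<beta> \<nu> e0 k * (1 - (\<eta> - \<beta> * L) / 2 * delta_star \<eta> L \<beta> \<nu> e0 k)"

end

theory Submission
  imports Defs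
begin

text \<open>Write \<open>a = \<eta> - \<beta> L\<close> and \<open>c = (1 + \<beta>)\<^sup>2 \<nu>\<^sup>2\<close>. One step of the recursion, started from the
  value \<open>2c/a \<cdot> d\<close>, completes to a square:
  \<open>(1 - a x) (2c/a \<cdot> d) + c x\<^sup>2 = 2c/a \<cdot> d (1 - a d / 2) + c (x - d)\<^sup>2\<close>.
  With \<open>x = d\<close> this propagates the closed form (a) along \<open>\<delta>\<^sup>*\<close>; for an arbitrary step
  with \<open>a x \<le> 1\<close> the recursion is monotone in the previous error, so by induction
  \<open>e\<^sub>k \<ge> e\<^sub>k(\<delta>\<^sup>*)\<close> and the last step contributes the extra square (b). Finally,
  strong monotonicity and Lipschitz continuity force \<open>\<eta> \<le> L\<close>, which together with
  \<open>\<nu> \<ge> L \<surd>(e\<^sub>0/2)\<close> keeps every \<open>\<delta>\<^sup>*\<^sub>k\<close> inside the admissible interval.\<close>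

lemma err_step_complete_square:
  fixes a c d x :: real
  assumes "a \<noteq> 0"
  shows "(1 - a * x) * (2 * c / a * d) + c * x^2
           = 2 * c / a * (d * (1 - a / 2 * d)) + c * (x - d)^2"
  using assms by (simp add: field_simps power2_eq_square)

lemma err_delta_star:
  assumes "\<eta> - \<beta> * L \<noteq> 0" and "(1 + \<beta>)^2 * \<nu>^2 \<noteq> 0"
  shows "err \<eta> L \<beta> \<nu> e0 (delta_star \<eta> L \<beta> \<nu> e0) k
           = 2 * (1 + \<beta>)^2 * \<nu>^2 / (\<eta> - \<beta> * L) * delta_star \<eta> L \<beta> \<nu> e0 k"
proof (induction k)
  case 0
  then show ?case using assms by (simp add: field_simps)
next
  case (Suc k)
  then show ?case
    using err_step_complete_square[OF assms(1), where c = "(1 + \<beta>)^2 * \<nu>^2"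
        and x = "delta_star \<eta> L \<beta> \<nu> e0 k" and d = "delta_star \<eta> L \<beta> \<nu> e0 k"]
    by simp
qed

lemma delta_star_bounds:
  assumes a_pos: "0 < \<eta> - \<beta> * L" and aG: "(\<eta> - \<beta> * L) * G \<le> 1"
    and "0 < delta_star \<eta> L \<beta> \<nu> e0 0" and "delta_star \<eta> L \<beta> \<nu> e0 0 \<le> G"
  shows "0 < delta_star \<eta> L \<beta> \<nu> e0 k \<and> delta_star \<eta> L \<beta> \<nu> e0 k \<le> G"
proof (induction k)
  case 0
  then show ?case using assms by simp
next
  case (Suc k)
  define a d where "a = \<eta> - \<beta> * L" and "d = delta_star \<eta> L \<beta> \<nu> e0 k"
  have d: "0 < d" "d \<le> G" using Suc by (auto simp: d_def)
  have "a * d \<le> a * G" using d a_pos by (simp add: a_def)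
  with aG have "a * d \<le> 1" by (simp add: a_def)
  with d have "0 < d * (1 - a / 2 * d)" by (intro mult_pos_pos) auto
  moreover have "d * (1 - a / 2 * d) \<le> d" using d a_pos by (simp add: a_def)
  ultimately show ?case using d by (simp add: a_def d_def)
qed

lemma err_Suc_ge_err_delta_star:
  assumes a_pos: "0 < \<eta> - \<beta> * L" and c_pos: "0 < (1 + \<beta>)^2 * \<nu>^2"
    and step: "(\<eta> - \<beta> * L) * \<delta> k \<le> 1"
    and prev: "err \<eta> L \<beta> \<nu> e0 (delta_star \<eta> L \<beta> \<nu> e0) k \<le> err \<eta> L \<beta> \<nu> e0 \<delta> k"
  shows "err \<eta> L \<beta> \<nu> e0 \<delta> (Suc k) - err \<eta> L \<beta> \<nu> e0 (delta_star \<eta> L \<beta> \<nu> e0) (Suc k)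
           \<ge> (1 + \<beta>)^2 * \<nu>^2 * (\<delta> k - delta_star \<eta> L \<beta> \<nu> e0 k)^2"
proof -
  define a c d x where "a = \<eta> - \<beta> * L" and "c = (1 + \<beta>)^2 * \<nu>^2"
    and "d = delta_star \<eta> L \<beta> \<nu> e0 k" and "x = \<delta> k"
  have a0: "a \<noteq> 0" using a_pos by (simp add: a_def)
  have closed_form: "err \<eta> L \<beta> \<nu> e0 (delta_star \<eta> L \<beta> \<nu> e0) j = 2 * c / a * delta_star \<eta> L \<beta> \<nu> e0 j"
    for j using err_delta_star[OF _ less_imp_neq[OF c_pos, symmetric]] a_pos
    unfolding a_def c_def by (simp add: mult.assoc)
  have "2 * c / a * d \<le> err \<eta> L \<beta> \<nu> e0 \<delta> k"
    using prev closed_form[of k] by (simp add: d_def)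
  moreover have "0 \<le> 1 - a * x" using step by (simp add: a_def x_def)
  ultimately have "(1 - a * x) * (2 * c / a * d) \<le> (1 - a * x) * err \<eta> L \<beta> \<nu> e0 \<delta> k"
    by (rule mult_left_mono)
  moreover have "err \<eta> L \<beta> \<nu> e0 \<delta> (Suc k) = (1 - a * x) * err \<eta> L \<beta> \<nu> e0 \<delta> k + c * x^2"
    by (simp add: a_def c_def x_def)
  ultimately have "err \<eta> L \<beta> \<nu> e0 \<delta> (Suc k) \<ge> (1 - a * x) * (2 * c / a * d) + c * x^2"
    by linarith
  also have "(1 - a * x) * (2 * c / a * d) + c * x^2
               = 2 * c / a * delta_star \<eta> L \<beta> \<nu> e0 (Suc k) + c * (x - d)^2"
    using err_step_complete_square[OF a0] by (simp add: a_def d_def)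
  also have "\<dots> = err \<eta> L \<beta> \<nu> e0 (delta_star \<eta> L \<beta> \<nu> e0) (Suc k) + c * (x - d)^2"
    by (simp only: closed_form)
  finally show ?thesis by (simp add: c_def x_def d_def)
qed

lemma err_ge_err_delta_star:
  assumes a_pos: "0 < \<eta> - \<beta> * L" and c_pos: "0 < (1 + \<beta>)^2 * \<nu>^2"
    and steps: "\<forall>j<k. (\<eta> - \<beta> * L) * \<delta> j \<le> 1"
  shows "err \<eta> L \<beta> \<nu> e0 (delta_star \<eta> L \<beta> \<nu> e0) k \<le> err \<eta> L \<beta> \<nu> e0 \<delta> k"
  using steps
proof (induction k)
  case 0
  then show ?case by simp
next
  case (Suc k)
  then have "(1 + \<beta>)^2 * \<nu>^2 * (\<delta> k - delta_star \<eta> L \<beta> \<nu> e0 k)^2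
               \<le> err \<eta> L \<beta> \<nu> e0 \<delta> (Suc k) - err \<eta> L \<beta> \<nu> e0 (delta_star \<eta> L \<beta> \<nu> e0) (Suc k)"
    using err_Suc_ge_err_delta_star[OF a_pos c_pos] by simp
  moreover have "0 \<le> (1 + \<beta>)^2 * \<nu>^2 * (\<delta> k - delta_star \<eta> L \<beta> \<nu> e0 k)^2"
    using c_pos by simp
  ultimately show ?case by linarith
qed

lemma strongly_monotone_Lipschitz_le:
  fixes F :: "'a::real_inner \<Rightarrow> 'a"
  assumes "x \<in> X" "y \<in> X" "x \<noteq> y"
    and lipschitz: "\<And>x y. x \<in> X \<Longrightarrow> y \<in> X \<Longrightarrow> norm (F x - F y) \<le> L * norm (x - y)"
    and strongly_monotone:
      "\<And>x y. x \<in> X \<Longrightarrow> y \<in> X \<Longrightarrow> (F x - F y) \<bullet> (x - y) \<ge> \<eta> * (norm (x - y))^2"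
  shows "\<eta> \<le> L"
proof -
  have "\<eta> * (norm (x - y))^2 \<le> (F x - F y) \<bullet> (x - y)"
    using strongly_monotone assms(1,2) .
  also have "\<dots> \<le> norm (F x - F y) * norm (x - y)"
    by (rule norm_cauchy_schwarz)
  also have "\<dots> \<le> L * (norm (x - y))^2"
    using lipschitz[OF assms(1,2)] by (simp add: power2_eq_square mult_right_mono mult.assoc[symmetric])
  finally show ?thesis using assms(3) by simp
qed

lemma delta_star_0_le:
  assumes a_pos: "0 < \<eta> - \<beta> * L" and "0 \<le> \<beta>" and "0 < L" and "0 < e0"
    and \<nu>_ge: "\<nu> \<ge> L * sqrt (e0 / 2)"
  shows "delta_star \<eta> L \<beta> \<nu> e0 0 \<le> (\<eta> - \<beta> * L) / ((1 + \<beta>)^2 * L^2)"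
proof -
  have "(L * sqrt (e0 / 2))^2 \<le> \<nu>^2"
    using \<nu>_ge assms by (intro power_mono) auto
  then have "L^2 * e0 \<le> 2 * \<nu>^2"
    using assms by (simp add: power_mult_distrib)
  then have "(1 + \<beta>)^2 * L^2 * e0 \<le> 2 * (1 + \<beta>)^2 * \<nu>^2"
    by (metis mult.assoc mult_left_mono mult.left_commute zero_le_power2)
  then show ?thesis
    using assms by (simp add: divide_simps mult_left_mono mult.commute mult.left_commute)
qed

lemma admissible_step_le_one:
  fixes \<eta> L \<beta> x :: real
  assumes a_pos: "0 < \<eta> - \<beta> * L" and "\<eta> \<le> L" and "0 \<le> \<beta>" and "0 < L"
    and x_le: "x \<le> (\<eta> - \<beta> * L) / ((1 + \<beta>)^2 * L^2)"
  shows "(\<eta> - \<beta> * L) * x \<le> 1"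
proof -
  have "0 \<le> \<beta> * L" using assms by simp
  with \<open>\<eta> \<le> L\<close> have "\<eta> - \<beta> * L \<le> (1 + \<beta>) * L"
    unfolding distrib_right by linarith
  then have "(\<eta> - \<beta> * L)^2 \<le> ((1 + \<beta>) * L)^2"
    using a_pos by (intro power_mono) auto
  then have "(\<eta> - \<beta> * L) * ((\<eta> - \<beta> * L) / ((1 + \<beta>)^2 * L^2)) \<le> 1"
    using assms by (simp add: power2_eq_square divide_simps mult_ac)
  moreover have "(\<eta> - \<beta> * L) * x \<le> (\<eta> - \<beta> * L) * ((\<eta> - \<beta> * L) / ((1 + \<beta>)^2 * L^2))"
    using a_pos x_le by (intro mult_left_mono) auto
  ultimately show ?thesis by linarith
qed

theorem proposition4:
  fixes F :: "real ^ 'n \<Rightarrow> real ^ 'n" and X :: "(real ^ 'n) set"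
    and \<eta> L \<nu> e0 \<beta> :: real
  assumes X_ne: "X \<noteq> {}" and X_closed: "closed X" and X_convex: "convex X"
    and X_nontriv: "\<exists>x\<in>X. \<exists>y\<in>X. x \<noteq> y"
    and lipschitz: "\<And>x y. x \<in> X \<Longrightarrow> y \<in> X \<Longrightarrow> norm (F x - F y) \<le> L * norm (x - y)"
    and strongly_monotone:
      "\<And>x y. x \<in> X \<Longrightarrow> y \<in> X \<Longrightarrow> (F x - F y) \<bullet> (x - y) \<ge> \<eta> * (norm (x - y))^2"
    and \<eta>_pos: "\<eta> > 0" and L_pos: "L > 0" and \<nu>_pos: "\<nu> > 0" and e0_pos: "e0 > 0"
    and \<nu>_ge: "\<nu> \<ge> L * sqrt (e0 / 2)"
    and \<beta>_nonneg: "0 \<le> \<beta>" and \<beta>_less: "\<beta> < \<eta> / L"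
  shows "(\<forall>k. err \<eta> L \<beta> \<nu> e0 (delta_star \<eta> L \<beta> \<nu> e0) k
               = 2 * (1 + \<beta>)^2 * \<nu>^2 / (\<eta> - \<beta> * L) * delta_star \<eta> L \<beta> \<nu> e0 k)
       \<and> (\<forall>k\<ge>1.
            (\<forall>j<k. 0 < delta_star \<eta> L \<beta> \<nu> e0 j
                    \<and> delta_star \<eta> L \<beta> \<nu> e0 j \<le> (\<eta> - \<beta> * L) / ((1 + \<beta>)^2 * L^2))
          \<and> (\<forall>\<delta> :: nat \<Rightarrow> real.
               (\<forall>j<k. 0 < \<delta> j \<and> \<delta> j \<le> (\<eta> - \<beta> * L) / ((1 + \<beta>)^2 * L^2)) \<longrightarrow>
               err \<eta> L \<beta> \<nu> e0 \<delta> k - err \<eta> L \<beta> \<nu> e0 (delta_star \<eta> L \<beta> \<nu> e0) k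
                 \<ge> (1 + \<beta>)^2 * \<nu>^2 * (\<delta> (k - 1) - delta_star \<eta> L \<beta> \<nu> e0 (k - 1))^2))"
proof -
  have a_pos: "0 < \<eta> - \<beta> * L" using \<beta>_less L_pos by (simp add: field_simps)
  have c_pos: "0 < (1 + \<beta>)^2 * \<nu>^2" using \<beta>_nonneg \<nu>_pos by simp
  have "\<eta> \<le> L"
    using X_nontriv strongly_monotone_Lipschitz_le[OF _ _ _ lipschitz strongly_monotone] by blast
  note step_le_one = admissible_step_le_one[OF a_pos this \<beta>_nonneg L_pos]
  have "0 < delta_star \<eta> L \<beta> \<nu> e0 0" using a_pos c_pos e0_pos by (simp add: mult.assoc)
  note delta_star_in = delta_star_bounds[OF a_pos step_le_one[OF order_refl] this
      delta_star_0_le[OF a_pos \<beta>_nonneg L_pos e0_pos \<nu>_ge]]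
  show ?thesis
  proof (intro conjI allI impI)
    fix k
    show "err \<eta> L \<beta> \<nu> e0 (delta_star \<eta> L \<beta> \<nu> e0) k
            = 2 * (1 + \<beta>)^2 * \<nu>^2 / (\<eta> - \<beta> * L) * delta_star \<eta> L \<beta> \<nu> e0 k"
      using err_delta_star[OF _ less_imp_neq[OF c_pos, symmetric]] a_pos by simp
  next
    fix k j
    show "0 < delta_star \<eta> L \<beta> \<nu> e0 j"
      and "delta_star \<eta> L \<beta> \<nu> e0 j \<le> (\<eta> - \<beta> * L) / ((1 + \<beta>)^2 * L^2)"
      using delta_star_in by auto
  next
    fix k :: nat and \<delta> :: "nat \<Rightarrow> real"
    assume "1 \<le> k" and "\<forall>j<k. 0 < \<delta> j \<and> \<delta> j \<le> (\<eta> - \<beta> * L) / ((1 + \<beta>)^2 * L^2)"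
    moreover obtain m where k: "k = Suc m" using \<open>1 \<le> k\<close> by (metis not0_implies_Suc not_one_le_zero)
    ultimately show "err \<eta> L \<beta> \<nu> e0 \<delta> k - err \<eta> L \<beta> \<nu> e0 (delta_star \<eta> L \<beta> \<nu> e0) k
                 \<ge> (1 + \<beta>)^2 * \<nu>^2 * (\<delta> (k - 1) - delta_star \<eta> L \<beta> \<nu> e0 (k - 1))^2"
      unfolding k diff_Suc_1
      by (intro err_Suc_ge_err_delta_star err_ge_err_delta_star a_pos c_pos allI impI step_le_one) auto
  qed
qed

end
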